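(* Let $\mathbb{H}$ be a finite-dimensional complex Hilbert space with $\dim\mathbb{H}\ge2$, let $k,n$ be positive integers, let $\alpha,\beta$ be complex numbers with $|\alpha|^2+|\beta|^2=1$ and $|\beta|\ne1$, and let $|\phi\rangle\in\mathbb{H}$ be a fixed unit vector (independent of the input; known or unknown). For a pure state $\rho_\psi$ on $\mathbb{H}$ let $|\varphi\rangle\propto\alpha|\psi\rangle+\beta|\phi\rangle$. Then: (i) if $0<|\beta|<1$, there is no probabilistic quantum transformation $\mathcal{F}$ from $\mathbb{H}^{\otimes k}$ to $\mathbb{H}^{\otimes n}$ with $\mathcal{F}(\rho_\psi^{\otimes k})=\rho_\varphi^{\otimes n}$ for all pure states $\rho_\psi$ on $\mathbb{H}$; (ii) if $\beta=0$ and $n>k$, there is no probabilistic quantum transformation $\mathcal{F}$ from $\mathbb{H}^{\otimes k}$ to $\mathbb{H}^{\otimes n}$ with $\mathcal{F}(\rho_\psi^{\otimes k})=\rho_\psi^{\otimes n}$ for all pure states $\rho_\psi$; (iii) if $\beta=0$ and $n<k$, there is no unitary $U$ on $\mathbb{H}^{\otimes k}$ with $U\rho_\psi^{\otimes k}U^\dagger=\rho_\psi^{\otimes n}\otimes\rho_0^{\otimes(k-n)}$ for all pure states $\rho_\psi$, where $|0\rangle\in\mathbb{H}$ is a fixed unit vector.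
   Context: For a unit vector $|\psi\rangle$, $\rho_\psi=|\psi\rangle\langle\psi|$; $|\varphi\rangle\propto|\chi\rangle$ means $|\varphi\rangle$ is the normalization of $|\chi\rangle$ up to a global phase. A probabilistic quantum transformation from $\mathbb{H}_1$ to $\mathbb{H}_2$ is a completely positive, trace-non-increasing linear map from operators on $\mathbb{H}_1$ to operators on $\mathbb{H}_2$; $\mathcal{F}(\rho)=\sigma$ for pure states means $\mathcal{F}(\rho)=p\sigma$ for some $p>0$. *)

theory Defs
  imports "Jordan_Normal_Form.Matrix"
begin

text \<open>The Hilbert space H is modelled as complex^d (d = dim H); operators on
  H^{(tensor k)} are d^k x d^k complex matrices.  Tensor products are Kronecker
  products (first factor = most significant index).\<close>

definition cadj :: "complex mat \<Rightarrow> complex mat" where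
  "cadj A = mat (dim_col A) (dim_row A) (\<lambda>(i,j). cnj (A $$ (j,i)))"

definition ctrace :: "complex mat \<Rightarrow> complex" where
  "ctrace A = (\<Sum>i<dim_row A. A $$ (i,i))"

definition vnorm :: "complex vec \<Rightarrow> real" where
  "vnorm v = sqrt (\<Sum>i<dim_vec v. (cmod (v $ i))\<^sup>2)"

definition unit_vec_in :: "nat \<Rightarrow> complex vec \<Rightarrow> bool" where
  "unit_vec_in d v \<longleftrightarrow> v \<in> carrier_vec d \<and> vnorm v = 1"

definition proj :: "complex vec \<Rightarrow> complex mat" where
  "proj v = mat (dim_vec v) (dim_vec v) (\<lambda>(i,j). v $ i * cnj (v $ j))"

text \<open>normalization of a vector (used only for nonzero vectors)\<close>
definition normalize_vec :: "complex vec \<Rightarrow> complex vec" where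
  "normalize_vec v = complex_of_real (1 / vnorm v) \<cdot>\<^sub>v v"

definition kron :: "complex mat \<Rightarrow> complex mat \<Rightarrow> complex mat" where
  "kron A B = mat (dim_row A * dim_row B) (dim_col A * dim_col B)
     (\<lambda>(i,j). A $$ (i div dim_row B, j div dim_col B) * B $$ (i mod dim_row B, j mod dim_col B))"

primrec tpow :: "complex mat \<Rightarrow> nat \<Rightarrow> complex mat" where
  "tpow A 0 = 1\<^sub>m 1"
| "tpow A (Suc k) = kron A (tpow A k)"

definition psd :: "nat \<Rightarrow> complex mat \<Rightarrow> bool" where
  "psd n A \<longleftrightarrow> A \<in> carrier_mat n n \<and>
     (\<forall>v \<in> carrier_vec n. Im (conjugate v \<bullet> (A *\<^sub>v v)) = 0 \<and> Re (conjugate v \<bullet> (A *\<^sub>v v)) \<ge> 0)"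

definition unitary_mat :: "nat \<Rightarrow> complex mat \<Rightarrow> bool" where
  "unitary_mat n U \<longleftrightarrow> U \<in> carrier_mat n n \<and> U * cadj U = 1\<^sub>m n \<and> cadj U * U = 1\<^sub>m n"

text \<open>(id_m tensor F)(X): X is an (m*a)x(m*a) matrix viewed as an m x m block matrix
  with a x a blocks; F is applied blockwise.\<close>
definition ext_map :: "nat \<Rightarrow> nat \<Rightarrow> nat \<Rightarrow> (complex mat \<Rightarrow> complex mat) \<Rightarrow> complex mat \<Rightarrow> complex mat" where
  "ext_map m a b F X = mat (m * b) (m * b)
     (\<lambda>(i,j). F (mat a a (\<lambda>(r,s). X $$ ((i div b) * a + r, (j div b) * a + s))) $$ (i mod b, j mod b))"

text \<open>Probabilistic quantum transformation from operators on C^a to operators on C^b: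
  linear, completely positive, trace-non-increasing.\<close>
definition prob_qt :: "nat \<Rightarrow> nat \<Rightarrow> (complex mat \<Rightarrow> complex mat) \<Rightarrow> bool" where
  "prob_qt a b F \<longleftrightarrow>
     (\<forall>A \<in> carrier_mat a a. F A \<in> carrier_mat b b) \<and>
     (\<forall>A \<in> carrier_mat a a. \<forall>B \<in> carrier_mat a a. F (A + B) = F A + F B) \<and>
     (\<forall>A \<in> carrier_mat a a. \<forall>c. F (c \<cdot>\<^sub>m A) = c \<cdot>\<^sub>m F A) \<and>
     (\<forall>m>0. \<forall>X. psd (m * a) X \<longrightarrow> psd (m * b) (ext_map m a b F X)) \<and>
     (\<forall>\<rho>. psd a \<rho> \<longrightarrow> Re (ctrace (F \<rho>)) \<le> Re (ctrace \<rho>))"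

end

theory Submission
  imports Defs
begin

text \<open>Test the hypotheses on the states psi z = (|0> + z |1>) / sqrt 2 with |z| = 1.
  Every entry of the k-th tensor power of proj (psi z) is a constant times z^a conj(z)^b
  with a, b \<le> k, so averaging z^(-n) times it over the N-th roots of unity z, N > n + k,
  gives the zero matrix when k < n.  The n-th tensor power, however, has the entry z^n / 2^n
  at position (|1...1>, |0...0>), and its average against positive weights does not vanish.
  Hence no linear map sends the k-th tensor power of every pure state to a positive multiple
  of its n-th tensor power; this gives (ii), and (iii) follows in the same way once the
  unitary conjugation is undone.  For (i), psi and -psi are the same state, so the outputs
  for alpha psi + beta phi and -alpha psi + beta phi must be proportional tensor powers;
  taking psi to be a basis vector orthogonal to a coordinate where phi is nonzero forces
  alpha = 0.\<close>

subsection \<open>Tensor powers of vectors\<close>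

definition vkron :: "complex vec \<Rightarrow> complex vec \<Rightarrow> complex vec" where
  "vkron a b = vec (dim_vec a * dim_vec b) (\<lambda>i. a $ (i div dim_vec b) * b $ (i mod dim_vec b))"

primrec vtpow :: "complex vec \<Rightarrow> nat \<Rightarrow> complex vec" where
  "vtpow v 0 = vec 1 (\<lambda>_. 1)"
| "vtpow v (Suc k) = vkron v (vtpow v k)"

lemma dim_vkron [simp]: "dim_vec (vkron a b) = dim_vec a * dim_vec b"
  by (simp add: vkron_def)

lemma dim_vtpow [simp]: "dim_vec (vtpow v m) = dim_vec v ^ m"
  by (induction m) auto

lemma index_vkron:
  "i < dim_vec a * dim_vec b \<Longrightarrow> vkron a b $ i = a $ (i div dim_vec b) * b $ (i mod dim_vec b)"
  by (simp add: vkron_def)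

lemma index_vkron_pair:
  assumes "x < dim_vec a" "y < dim_vec b"
  shows "vkron a b $ (x * dim_vec b + y) = a $ x * b $ y"
proof -
  have "x * dim_vec b + y < Suc x * dim_vec b" using assms by simp
  also have "\<dots> \<le> dim_vec a * dim_vec b" using assms by (intro mult_le_mono1) simp
  moreover have "(x * dim_vec b + y) div dim_vec b = x" "(x * dim_vec b + y) mod dim_vec b = y"
    using assms(2) by (simp_all add: div_add1_eq)
  ultimately show ?thesis by (simp add: index_vkron)
qed

lemma dim_proj [simp]: "dim_row (proj v) = dim_vec v" "dim_col (proj v) = dim_vec v"
  by (auto simp: proj_def)

lemma index_proj [simp]:
  "i < dim_vec v \<Longrightarrow> j < dim_vec v \<Longrightarrow> proj v $$ (i, j) = v $ i * cnj (v $ j)"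
  by (simp add: proj_def)

lemma proj_carrier_mat: "proj v \<in> carrier_mat (dim_vec v) (dim_vec v)"
  by (rule carrier_matI) simp_all

lemma proj_uminus_one_smult: "proj ((-1) \<cdot>\<^sub>v v) = proj v"
  by (rule eq_matI) auto

lemma dim_kron [simp]:
  "dim_row (kron A B) = dim_row A * dim_row B" "dim_col (kron A B) = dim_col A * dim_col B"
  unfolding kron_def by simp_all

lemma kron_proj: "kron (proj a) (proj b) = proj (vkron a b)"
proof (rule eq_matI)
  fix i j assume "i < dim_row (proj (vkron a b))" "j < dim_col (proj (vkron a b))"
  then have i: "i < dim_vec a * dim_vec b" and j: "j < dim_vec a * dim_vec b" by simp_all
  then have "dim_vec b > 0" by (cases "dim_vec b = 0") auto
  with i j show "kron (proj a) (proj b) $$ (i, j) = proj (vkron a b) $$ (i, j)"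
    by (simp add: kron_def index_vkron less_mult_imp_div_less)
qed simp_all

lemma tpow_proj: "tpow (proj v) m = proj (vtpow v m)"
proof (induction m)
  case 0
  show ?case by (rule eq_matI) auto
next
  case (Suc m)
  then show ?case by (simp add: kron_proj)
qed

lemma tpow_proj_carrier_mat: "dim_vec v = d \<Longrightarrow> tpow (proj v) m \<in> carrier_mat (d ^ m) (d ^ m)"
  using proj_carrier_mat[of "vtpow v m"] by (simp add: tpow_proj)

text \<open>The index of the basis vector |c...c> of the r-fold tensor power of \<open>\<complex>\<^sup>D\<close>.\<close>

fun const_digit_index :: "nat \<Rightarrow> nat \<Rightarrow> nat \<Rightarrow> nat" where
  "const_digit_index D c 0 = 0"
| "const_digit_index D c (Suc r) = c * D ^ r + const_digit_index D c r"

lemma const_digit_index_less: "c < D \<Longrightarrow> const_digit_index D c r < D ^ r"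
proof (induction r)
  case 0 then show ?case by simp
next
  case (Suc r)
  then have "const_digit_index D c (Suc r) < Suc c * D ^ r" by simp
  also have "\<dots> \<le> D * D ^ r" using Suc.prems by (intro mult_le_mono1) simp
  finally show ?case by simp
qed

lemma const_digit_index_0 [simp]: "const_digit_index D 0 r = 0"
  by (induction r) simp_all

lemma vtpow_const_digit_index:
  assumes "c < dim_vec v"
  shows "vtpow v r $ const_digit_index (dim_vec v) c r = (v $ c) ^ r"
proof (induction r)
  case 0 then show ?case by simp
next
  case (Suc r)
  have "vtpow v (Suc r) $ const_digit_index (dim_vec v) c (Suc r)
      = v $ c * vtpow v r $ const_digit_index (dim_vec v) c r"
    using index_vkron_pair[OF assms, of "const_digit_index (dim_vec v) c r" "vtpow v r"]
      const_digit_index_less[OF assms] by simp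
  with Suc show ?case by simp
qed

lemma vtpow_Suc_const_digit_index:
  fixes m :: nat
  assumes c: "c < dim_vec v" and j: "j < dim_vec v"
  defines "i \<equiv> j * dim_vec v ^ m + const_digit_index (dim_vec v) c m"
  shows "i < dim_vec v ^ Suc m" and "vtpow v (Suc m) $ i = v $ j * (v $ c) ^ m"
proof -
  have "i < Suc j * dim_vec v ^ m" using const_digit_index_less[OF c] by (simp add: i_def)
  also have "\<dots> \<le> dim_vec v * dim_vec v ^ m" using j by (intro mult_le_mono1) simp
  finally show "i < dim_vec v ^ Suc m" by simp
  show "vtpow v (Suc m) $ i = v $ j * (v $ c) ^ m"
    using index_vkron_pair[of j v "const_digit_index (dim_vec v) c m" "vtpow v m"]
      j const_digit_index_less[OF c] vtpow_const_digit_index[OF c]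
    by (simp add: i_def)
qed

subsection \<open>Families of vectors with monomial entries\<close>

definition monomial_family :: "(complex \<Rightarrow> complex vec) \<Rightarrow> nat \<Rightarrow> nat \<Rightarrow> bool" where
  "monomial_family v D m \<longleftrightarrow>
     (\<forall>z. dim_vec (v z) = D) \<and> (\<forall>i<D. \<exists>c w. w \<le> m \<and> (\<forall>z. v z $ i = c * z ^ w))"

lemma monomial_family_const: "monomial_family (\<lambda>_. v) (dim_vec v) 0"
  unfolding monomial_family_def by (metis mult.right_neutral order_refl power_0)

lemma monomial_family_vkron:
  assumes a: "monomial_family a A m1" and b: "monomial_family b B m2"
  shows "monomial_family (\<lambda>z. vkron (a z) (b z)) (A * B) (m1 + m2)"
  unfolding monomial_family_def
proof (intro conjI allI impI)
  fix z show "dim_vec (vkron (a z) (b z)) = A * B" using a b by (simp add: monomial_family_def)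
next
  fix i assume i: "i < A * B"
  then have "B > 0" by (cases "B = 0") auto
  with i have "i div B < A" "i mod B < B" by (simp_all add: less_mult_imp_div_less)
  then obtain c1 w1 c2 w2 where "w1 \<le> m1" "\<forall>z. a z $ (i div B) = c1 * z ^ w1"
    and "w2 \<le> m2" "\<forall>z. b z $ (i mod B) = c2 * z ^ w2"
    using a b unfolding monomial_family_def by meson
  moreover have "\<forall>z. dim_vec (a z) = A" "\<forall>z. dim_vec (b z) = B"
    using a b by (simp_all add: monomial_family_def)
  ultimately show "\<exists>c w. w \<le> m1 + m2 \<and> (\<forall>z. vkron (a z) (b z) $ i = c * z ^ w)"
    using i by (intro exI[of _ "c1 * c2"] exI[of _ "w1 + w2"])
      (simp add: index_vkron power_add mult_ac)
qed

lemma monomial_family_vtpow: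
  assumes "monomial_family a A m"
  shows "monomial_family (\<lambda>z. vtpow (a z) r) (A ^ r) (m * r)"
proof (induction r)
  case 0
  show ?case unfolding monomial_family_def by (auto intro: exI[of _ 1] exI[of _ 0])
next
  case (Suc r)
  show ?case using monomial_family_vkron[OF assms Suc] by simp
qed

lemma sum_cis_multiple_eq_0:
  fixes e :: int and N :: nat
  assumes "e \<noteq> 0" "\<bar>e\<bar> < int N"
  shows "(\<Sum>t<N. cis (2 * pi * real t * real_of_int e / real N)) = 0"
proof -
  define \<omega> where "\<omega> = cis (2 * pi * real_of_int e / real N)"
  have N0: "N > 0" using assms by linarith
  have "\<omega> \<noteq> 1"
  proof
    assume "\<omega> = 1"
    then have "cos (2 * pi * real_of_int e / real N) = 1"
      by (auto simp: \<omega>_def complex_eq_iff)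
    then obtain k :: int where "2 * pi * real_of_int e / real N = k * 2 * pi"
      by (auto simp: cos_one_2pi_int)
    then have "real_of_int e = real N * k" using N0 by (simp add: field_simps)
    then have e: "e = int N * k" by (metis of_int_eq_iff of_int_mult of_int_of_nat_eq)
    then have "k \<noteq> 0" using assms(1) by simp
    then have "int N * 1 \<le> int N * \<bar>k\<bar>" by (intro mult_left_mono) auto
    then show False using assms(2) by (simp add: e abs_mult)
  qed
  have "(\<Sum>t<N. cis (2 * pi * real t * real_of_int e / real N)) = (\<Sum>t<N. \<omega> ^ t)"
    by (intro sum.cong refl) (auto simp: \<omega>_def DeMoivre mult_ac)
  also have "\<dots> = (1 - \<omega> ^ N) / (1 - \<omega>)" using \<open>\<omega> \<noteq> 1\<close> by (simp add: sum_gp_strict)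
  also have "\<omega> ^ N = cis (2 * pi * real_of_int e)" using N0 by (simp add: \<omega>_def DeMoivre)
  also have "\<dots> = 1" by (rule cis_multiple_2pi) simp
  finally show ?thesis by simp
qed

text \<open>An entry of \<open>proj (v z)\<close> is a multiple of \<open>z\<^sup>a (cnj z)\<^sup>b\<close> with \<open>a, b \<le> m\<close>,
  so for \<open>m < M\<close> it has no Fourier mode of frequency \<open>M\<close>.\<close>

lemma fourier_coeff_proj_entry_eq_0:
  assumes v: "monomial_family v D m" and "m < M" "m + M < N" and i: "i < D" and j: "j < D"
  shows "(\<Sum>t<N. cis (-(2 * pi * real t * real M / real N)) *
            proj (v (cis (2 * pi * real t / real N))) $$ (i, j)) = 0"
proof -
  obtain c w c' w' where "w \<le> m" "\<forall>z. v z $ i = c * z ^ w" "w' \<le> m" "\<forall>z. v z $ j = c' * z ^ w'"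
    using v i j unfolding monomial_family_def by meson
  moreover have "\<forall>z. dim_vec (v z) = D" using v by (simp add: monomial_family_def)
  moreover define e where "e = int w - int w' - int M"
  ultimately have entry: "cis (-(2 * pi * real t * real M / real N)) *
      proj (v (cis (2 * pi * real t / real N))) $$ (i, j)
      = (c * cnj c') * cis (2 * pi * real t * real_of_int e / real N)" for t
  proof -
    define x where "x = 2 * pi * real t / real N"
    have "cis (-(2 * pi * real t * real M / real N)) * proj (v (cis x)) $$ (i, j)
        = (c * cnj c') * (cis (-(2 * pi * real t * real M / real N)) * cis (real w * x)
            * cis (-(real w' * x)))"
      using i j \<open>\<forall>z. dim_vec (v z) = D\<close> \<open>\<forall>z. v z $ i = c * z ^ w\<close> \<open>\<forall>z. v z $ j = c' * z ^ w'\<close>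
      by (simp add: DeMoivre cis_cnj mult_ac)
    also have "\<dots> = (c * cnj c') * cis (-(2 * pi * real t * real M / real N) + real w * x
            + -(real w' * x))"
      by (simp add: cis_mult)
    also have "-(2 * pi * real t * real M / real N) + real w * x + -(real w' * x)
        = 2 * pi * real t * real_of_int e / real N"
      using \<open>m + M < N\<close> by (simp add: x_def e_def field_simps)
    finally show ?thesis by (simp add: x_def)
  qed
  have "(\<Sum>t<N. cis (2 * pi * real t * real_of_int e / real N)) = 0"
    by (rule sum_cis_multiple_eq_0) (use \<open>w \<le> m\<close> \<open>w' \<le> m\<close> assms(2,3) in \<open>auto simp: e_def\<close>)
  then show ?thesis by (simp add: entry sum_distrib_left[symmetric])
qed

primrec mat_sum :: "nat \<Rightarrow> (nat \<Rightarrow> complex mat) \<Rightarrow> nat \<Rightarrow> complex mat" where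
  "mat_sum D f 0 = 0\<^sub>m D D"
| "mat_sum D f (Suc N) = mat_sum D f N + f N"

lemma mat_sum_carrier: "(\<And>t. f t \<in> carrier_mat D D) \<Longrightarrow> mat_sum D f N \<in> carrier_mat D D"
  by (induction N) auto

lemma index_mat_sum:
  assumes "\<And>t. f t \<in> carrier_mat D D" "i < D" "j < D"
  shows "mat_sum D f N $$ (i, j) = (\<Sum>t<N. f t $$ (i, j))"
proof (induction N)
  case (Suc N)
  have "f N \<in> carrier_mat D D" "mat_sum D f N \<in> carrier_mat D D"
    using assms(1) mat_sum_carrier[OF assms(1)] by auto
  with Suc assms(2,3) show ?case by simp
qed (use assms in simp)

definition linear_on :: "nat \<Rightarrow> nat \<Rightarrow> (complex mat \<Rightarrow> complex mat) \<Rightarrow> bool" where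
  "linear_on a b G \<longleftrightarrow>
     (\<forall>A \<in> carrier_mat a a. G A \<in> carrier_mat b b) \<and>
     (\<forall>A \<in> carrier_mat a a. \<forall>B \<in> carrier_mat a a. G (A + B) = G A + G B) \<and>
     (\<forall>A \<in> carrier_mat a a. \<forall>c. G (c \<cdot>\<^sub>m A) = c \<cdot>\<^sub>m G A)"

lemma prob_qt_linear_on: "prob_qt a b F \<Longrightarrow> linear_on a b F"
  by (simp add: prob_qt_def linear_on_def)

lemma linear_on_mult_mult:
  assumes "P \<in> carrier_mat b a" "Q \<in> carrier_mat a b"
  shows "linear_on a b (\<lambda>A. P * A * Q)"
  unfolding linear_on_def
proof (intro conjI ballI allI)
  fix A B :: "complex mat" assume A: "A \<in> carrier_mat a a" and B: "B \<in> carrier_mat a a"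
  show "P * A * Q \<in> carrier_mat b b" using assms A by simp
  show "P * (A + B) * Q = P * A * Q + P * B * Q"
    using assms A B by (simp add: mult_add_distrib_mat add_mult_distrib_mat[of _ b a])
  fix c :: complex
  show "P * (c \<cdot>\<^sub>m A) * Q = c \<cdot>\<^sub>m (P * A * Q)"
    using assms A by (simp add: mult_smult_distrib mult_smult_assoc_mat[of _ b a])
qed

lemma linear_on_zero:
  assumes "linear_on a b G"
  shows "G (0\<^sub>m a a) = 0\<^sub>m b b"
proof -
  have "G (0\<^sub>m a a) \<in> carrier_mat b b" using assms by (simp add: linear_on_def)
  have "G (0\<^sub>m a a) = G (0 \<cdot>\<^sub>m 0\<^sub>m a a)" by (metis smult_zero_mat)
  also have "\<dots> = 0 \<cdot>\<^sub>m G (0\<^sub>m a a)"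
    using assms zero_carrier_mat unfolding linear_on_def by blast
  also have "\<dots> = 0\<^sub>m b b" using \<open>G (0\<^sub>m a a) \<in> carrier_mat b b\<close> by (intro eq_matI) auto
  finally show ?thesis .
qed

lemma linear_on_mat_sum:
  assumes G: "linear_on a b G" and f: "\<And>t. f t \<in> carrier_mat a a"
  shows "G (mat_sum a f N) = mat_sum b (\<lambda>t. G (f t)) N"
  by (induction N) (use G f mat_sum_carrier[OF f] in \<open>auto simp: linear_on_zero linear_on_def\<close>)

text \<open>Averaging against \<open>z\<^sup>-\<^sup>M\<close> over roots of unity annihilates \<open>proj (v z)\<close>, but
  not the \<open>(I, J)\<close> entry of the images, which becomes \<open>c * cnj c'\<close> times a sum of
  positive numbers.\<close>

lemma no_linear_map_raising_degree:
  assumes G: "linear_on D D' G" and v: "monomial_family v D m"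
    and w: "\<forall>z. dim_vec (w z) = D'" "\<forall>z. w z $ I = c * z ^ M" "\<forall>z. w z $ J = c'"
    and "c \<noteq> 0" "c' \<noteq> 0" "I < D'" "J < D'" "m < M"
    and image: "\<forall>z. cmod z = 1 \<longrightarrow>
                  (\<exists>p::real. p > 0 \<and> G (proj (v z)) = complex_of_real p \<cdot>\<^sub>m proj (w z))"
  shows False
proof -
  define N where "N = m + M + 1"
  define z where "z t = cis (2 * pi * real t / real N)" for t
  define \<omega> where "\<omega> t = cis (-(2 * pi * real t * real M / real N))" for t
  have "\<forall>t. \<exists>p::real. p > 0 \<and> G (proj (v (z t))) = complex_of_real p \<cdot>\<^sub>m proj (w (z t))"
    using image by (simp add: z_def)
  then obtain p where p: "\<And>t. p t > 0"
    "\<And>t. G (proj (v (z t))) = complex_of_real (p t) \<cdot>\<^sub>m proj (w (z t))"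
    by metis
  define X where "X t = \<omega> t \<cdot>\<^sub>m proj (v (z t))" for t
  have v_dim: "\<forall>z. dim_vec (v z) = D" using v by (simp add: monomial_family_def)
  then have v_carrier: "proj (v z) \<in> carrier_mat D D" for z
    using proj_carrier_mat[of "v z"] by simp
  then have X_carrier: "X t \<in> carrier_mat D D" for t by (simp add: X_def)
  have "mat_sum D X N = 0\<^sub>m D D"
  proof (rule eq_matI)
    fix i j assume "i < dim_row (0\<^sub>m D D)" "j < dim_col (0\<^sub>m D D)"
    then have ij: "i < D" "j < D" by simp_all
    with v_dim have "mat_sum D X N $$ (i, j)
        = (\<Sum>t<N. \<omega> t * proj (v (z t)) $$ (i, j))"
      by (simp add: index_mat_sum[of X, OF X_carrier] X_def)
    also have "\<dots> = 0"
      unfolding \<omega>_def z_def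
      by (rule fourier_coeff_proj_entry_eq_0[OF v]) (use ij \<open>m < M\<close> in \<open>simp_all add: N_def\<close>)
    finally show "mat_sum D X N $$ (i, j) = 0\<^sub>m D D $$ (i, j)" using ij by simp
  qed (use mat_sum_carrier[of X, OF X_carrier] in auto)
  then have "mat_sum D' (\<lambda>t. G (X t)) N = 0\<^sub>m D' D'"
    using linear_on_mat_sum[of _ _ G X, OF G X_carrier] linear_on_zero[OF G] by metis
  moreover have GX: "G (X t) = \<omega> t \<cdot>\<^sub>m (complex_of_real (p t) \<cdot>\<^sub>m proj (w (z t)))" for t
    using G v_carrier p(2) by (simp add: X_def linear_on_def)
  moreover have "G (X t) \<in> carrier_mat D' D'" for t
    using G X_carrier by (simp add: linear_on_def)
  moreover have "G (X t) $$ (I, J) = c * cnj c' * complex_of_real (p t)" for t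
  proof -
    have "\<omega> t * z t ^ M = 1" by (simp add: \<omega>_def z_def DeMoivre cis_mult)
    then show ?thesis using w \<open>I < D'\<close> \<open>J < D'\<close> by (simp add: GX)
  qed
  ultimately have "c * cnj c' * complex_of_real (\<Sum>t<N. p t) = 0"
    using index_mat_sum[of "\<lambda>t. G (X t)" D' I J N] \<open>I < D'\<close> \<open>J < D'\<close>
    by (simp add: sum_distrib_left)
  moreover have "(\<Sum>t<N. p t) > 0" by (rule sum_pos) (use p(1) in \<open>auto simp: N_def\<close>)
  ultimately show False using \<open>c \<noteq> 0\<close> \<open>c' \<noteq> 0\<close> by (simp del: of_real_sum)
qed

subsection \<open>The test states\<close>

definition inv_sqrt2 :: complex where "inv_sqrt2 = complex_of_real (sqrt (1/2))"

definition equator_state :: "nat \<Rightarrow> complex \<Rightarrow> complex vec" where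
  "equator_state d z = vec d (\<lambda>i. if i = 0 then inv_sqrt2 else if i = 1 then inv_sqrt2 * z else 0)"

lemma dim_equator_state [simp]: "dim_vec (equator_state d z) = d"
  by (simp add: equator_state_def)

lemma index_equator_state:
  "i < d \<Longrightarrow> equator_state d z $ i = (if i = 0 then inv_sqrt2 else if i = 1 then inv_sqrt2 * z else 0)"
  by (simp add: equator_state_def)

lemma monomial_family_equator_state: "monomial_family (equator_state d) d 1"
  unfolding monomial_family_def
proof (intro conjI allI impI)
  fix i assume "i < d"
  then have "equator_state d z $ i = (if i \<le> 1 then inv_sqrt2 else 0) * z ^ (if i = 1 then 1 else 0)"
    for z by (simp add: index_equator_state)
  then show "\<exists>c w. w \<le> 1 \<and> (\<forall>z. equator_state d z $ i = c * z ^ w)"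
    by (intro exI[of _ "if i \<le> 1 then inv_sqrt2 else 0"] exI[of _ "if i = 1 then 1 else 0"]) simp
qed simp

lemma unit_vec_in_equator_state:
  assumes "d \<ge> 2" and "cmod z = 1"
  shows "unit_vec_in d (equator_state d z)"
proof -
  define g where "g i = (cmod (equator_state d z $ i))\<^sup>2" for i
  have "(\<Sum>i<d. g i) = (\<Sum>i<2. g i)"
    by (rule sum.mono_neutral_right) (use assms(1) in \<open>auto simp: g_def index_equator_state\<close>)
  also have "\<dots> = 1"
    using assms by (simp add: numeral_2_eq_2 g_def index_equator_state inv_sqrt2_def norm_mult)
  finally show ?thesis by (simp add: unit_vec_in_def vnorm_def g_def carrier_vecI)
qed

lemma vtpow_equator_state_entries:
  assumes "d \<ge> 2"
  shows "vtpow (equator_state d z) n $ const_digit_index d 1 n = inv_sqrt2 ^ n * z ^ n"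
    and "vtpow (equator_state d z) n $ 0 = inv_sqrt2 ^ n"
  using vtpow_const_digit_index[of 1 "equator_state d z" n]
    vtpow_const_digit_index[of 0 "equator_state d z" n] assms
  by (simp_all add: index_equator_state power_mult_distrib)

lemma inv_sqrt2_nonzero: "inv_sqrt2 \<noteq> 0"
  by (simp add: inv_sqrt2_def)

subsection \<open>Probabilistic cloning and unitary deletion\<close>

lemma no_linear_cloning:
  assumes "d \<ge> 2" and "k < n" and F: "linear_on (d ^ k) (d ^ n) F"
    and clone: "\<forall>\<psi>. unit_vec_in d \<psi> \<longrightarrow>
      (\<exists>p::real. p > 0 \<and> F (tpow (proj \<psi>) k) = complex_of_real p \<cdot>\<^sub>m tpow (proj \<psi>) n)"
  shows False
proof (rule no_linear_map_raising_degree[OF F, where I = "const_digit_index d 1 n" and J = 0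
      and c = "inv_sqrt2 ^ n" and c' = "inv_sqrt2 ^ n"])
  show "monomial_family (\<lambda>z. vtpow (equator_state d z) k) (d ^ k) k"
    using monomial_family_vtpow[OF monomial_family_equator_state, of d k] by simp
  show "\<forall>z. cmod z = 1 \<longrightarrow> (\<exists>p::real. p > 0 \<and> F (proj (vtpow (equator_state d z) k)) =
      complex_of_real p \<cdot>\<^sub>m proj (vtpow (equator_state d z) n))"
    using clone unit_vec_in_equator_state[OF assms(1)] by (simp add: tpow_proj)
qed (use assms in \<open>simp_all add: vtpow_equator_state_entries[simplified]
      const_digit_index_less inv_sqrt2_nonzero\<close>)

lemma cadj_carrier_mat: "U \<in> carrier_mat a b \<Longrightarrow> cadj U \<in> carrier_mat b a"
  unfolding cadj_def by (intro carrier_matI) auto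

lemma unitary_conj_cancel:
  assumes U: "unitary_mat D U" and A: "A \<in> carrier_mat D D"
  shows "cadj U * (U * A * cadj U) * U = A"
proof -
  have U_carrier: "U \<in> carrier_mat D D" and inv: "cadj U * U = 1\<^sub>m D"
    using U unfolding unitary_mat_def by auto
  have U'_carrier: "cadj U \<in> carrier_mat D D"
    using U_carrier by (rule cadj_carrier_mat)
  have UA: "U * A \<in> carrier_mat D D" using U_carrier A by simp
  have "cadj U * (U * A) = A"
    using assoc_mult_mat[OF U'_carrier U_carrier A] inv A by simp
  then have "cadj U * (U * A * cadj U) = A * cadj U"
    using assoc_mult_mat[OF U'_carrier UA U'_carrier] by simp
  then show ?thesis
    using assoc_mult_mat[OF A U'_carrier U_carrier] inv A by simp
qed

lemma no_unitary_deletion: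
  assumes "d \<ge> 2" and "n < k" and "dim_vec z0 = d" and U: "unitary_mat (d ^ k) U"
    and delete: "\<forall>\<psi>. unit_vec_in d \<psi> \<longrightarrow>
      U * tpow (proj \<psi>) k * cadj U = kron (tpow (proj \<psi>) n) (tpow (proj z0) (k - n))"
  shows False
proof -
  have dims: "d ^ n * d ^ (k - n) = d ^ k" using \<open>n < k\<close> by (simp flip: power_add)
  have "U \<in> carrier_mat (d ^ k) (d ^ k)" using U by (simp add: unitary_mat_def)
  then have "linear_on (d ^ k) (d ^ k) (\<lambda>A. cadj U * A * U)"
    by (intro linear_on_mult_mult cadj_carrier_mat)
  then show False
  proof (rule no_linear_map_raising_degree[where I = "const_digit_index d 1 k" and J = 0
        and c = "inv_sqrt2 ^ k" and c' = "inv_sqrt2 ^ k"])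
    show "monomial_family (\<lambda>z. vkron (vtpow (equator_state d z) n) (vtpow z0 (k - n))) (d ^ k) n"
      using monomial_family_vkron[OF monomial_family_vtpow[OF monomial_family_equator_state]
          monomial_family_vtpow[OF monomial_family_const]] \<open>dim_vec z0 = d\<close> dims
      by (metis add_0_right mult_1 mult_zero_left)
    have "cadj U * proj (vkron (vtpow (equator_state d z) n) (vtpow z0 (k - n))) * U
        = proj (vtpow (equator_state d z) k)" if "cmod z = 1" for z
    proof -
      have "proj (vkron (vtpow (equator_state d z) n) (vtpow z0 (k - n)))
          = U * proj (vtpow (equator_state d z) k) * cadj U"
        using delete unit_vec_in_equator_state[OF assms(1) that] by (simp add: tpow_proj kron_proj)
      then show ?thesis
        using unitary_conj_cancel[OF U] tpow_proj_carrier_mat[of "equator_state d z" d k]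
        by (simp add: tpow_proj)
    qed
    then show "\<forall>z. cmod z = 1 \<longrightarrow> (\<exists>p::real. p > 0 \<and>
        cadj U * proj (vkron (vtpow (equator_state d z) n) (vtpow z0 (k - n))) * U
        = complex_of_real p \<cdot>\<^sub>m proj (vtpow (equator_state d z) k))"
      by (auto intro!: exI[of _ 1] eq_matI)
  qed (use assms in \<open>simp_all add: vtpow_equator_state_entries[simplified]
      const_digit_index_less inv_sqrt2_nonzero\<close>)
qed

subsection \<open>Superposing with a fixed state\<close>

lemma vnorm_nonzero:
  assumes "c < dim_vec v" "v $ c \<noteq> 0"
  shows "vnorm v \<noteq> 0"
proof -
  have "(\<Sum>i<dim_vec v. (cmod (v $ i))\<^sup>2) > 0" by (rule sum_pos2[of _ c]) (use assms in auto)
  then show ?thesis by (simp add: vnorm_def)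
qed

lemma unit_vec_in_unit_vec: "j < d \<Longrightarrow> unit_vec_in d (unit_vec d j)"
proof -
  assume "j < d"
  then have "(\<Sum>i<d. (cmod (unit_vec d j $ i))\<^sup>2) = (\<Sum>i<d. if i = j then 1 else 0)"
    by (intro sum.cong) auto
  with \<open>j < d\<close> show ?thesis by (simp add: unit_vec_in_def vnorm_def)
qed

lemma unit_vec_in_uminus: "unit_vec_in d v \<Longrightarrow> unit_vec_in d ((-1) \<cdot>\<^sub>v v)"
  by (simp add: unit_vec_in_def vnorm_def)

text \<open>Proportional tensor powers come from proportional vectors: compare the entries
  of the two projections at \<open>(|jc\<dots>c\<rangle>, |c\<dots>c\<rangle>)\<close> and at \<open>(|c\<dots>c\<rangle>, |c\<dots>c\<rangle>)\<close>.\<close>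

lemma proportional_proj_vtpow:
  assumes eq: "a \<cdot>\<^sub>m proj (vtpow u n) = b \<cdot>\<^sub>m proj (vtpow w n)"
    and "a \<noteq> 0" "n > 0" "u $ c \<noteq> 0" and c: "c < dim_vec u" and j: "j < dim_vec u"
    and "dim_vec w = dim_vec u"
  shows "u $ j * w $ c = w $ j * u $ c"
proof -
  obtain m where n: "n = Suc m" using \<open>n > 0\<close> by (cases n) auto
  define D where "D = dim_vec u"
  define I where "I = j * D ^ m + const_digit_index D c m"
  define J where "J = const_digit_index D c n"
  have IJ: "I < D ^ n" "J < D ^ n"
    using vtpow_Suc_const_digit_index(1)[OF c j, of m] const_digit_index_less[OF c, of n]
    by (simp_all only: I_def J_def D_def n)
  have entries: "vtpow v n $ I = v $ j * (v $ c) ^ m" "vtpow v n $ J = (v $ c) ^ n"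
    if "dim_vec v = D" for v
    using that vtpow_Suc_const_digit_index(2)[of c v j m] vtpow_const_digit_index[of c v n] c j
    by (simp_all add: I_def J_def D_def n)
  define P where "P = a * ((u $ c) ^ n * cnj ((u $ c) ^ n))"
  have "P \<noteq> 0" using \<open>a \<noteq> 0\<close> \<open>u $ c \<noteq> 0\<close> by (simp add: P_def)
  have "(a \<cdot>\<^sub>m proj (vtpow u n)) $$ (J, J) = (b \<cdot>\<^sub>m proj (vtpow w n)) $$ (J, J)"
    using eq by simp
  then have P: "P = b * ((w $ c) ^ n * cnj ((w $ c) ^ n))"
    using IJ entries assms(7) by (simp add: P_def D_def)
  have "(a \<cdot>\<^sub>m proj (vtpow u n)) $$ (I, J) = (b \<cdot>\<^sub>m proj (vtpow w n)) $$ (I, J)"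
    using eq by simp
  then have "a * (u $ j * (u $ c) ^ m * cnj ((u $ c) ^ n))
      = b * (w $ j * (w $ c) ^ m * cnj ((w $ c) ^ n))"
    using IJ entries assms(7) by (simp add: D_def)
  then have "u $ c * w $ c * (a * (u $ j * (u $ c) ^ m * cnj ((u $ c) ^ n)))
      = u $ c * w $ c * (b * (w $ j * (w $ c) ^ m * cnj ((w $ c) ^ n)))"
    by simp
  moreover have "u $ c * w $ c * (a * (u $ j * (u $ c) ^ m * cnj ((u $ c) ^ n)))
      = (u $ j * w $ c) * P"
    unfolding P_def n power_Suc by (simp only: ac_simps)
  moreover have "u $ c * w $ c * (b * (w $ j * (w $ c) ^ m * cnj ((w $ c) ^ n)))
      = (w $ j * u $ c) * P"
    unfolding P n power_Suc by (simp only: ac_simps)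
  ultimately have "(u $ j * w $ c) * P = (w $ j * u $ c) * P" by metis
  with \<open>P \<noteq> 0\<close> show ?thesis by simp
qed

lemma no_superposing_map:
  assumes "d \<ge> 2" and "n > 0" and "\<alpha> \<noteq> 0" and "\<beta> \<noteq> 0" and \<phi>: "unit_vec_in d \<phi>"
    and superpose: "\<forall>\<psi>. unit_vec_in d \<psi> \<and> \<alpha> \<cdot>\<^sub>v \<psi> + \<beta> \<cdot>\<^sub>v \<phi> \<noteq> 0\<^sub>v d \<longrightarrow>
      (\<exists>p::real. p > 0 \<and> F (tpow (proj \<psi>) k) =
         complex_of_real p \<cdot>\<^sub>m tpow (proj (normalize_vec (\<alpha> \<cdot>\<^sub>v \<psi> + \<beta> \<cdot>\<^sub>v \<phi>))) n)"
  shows False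
proof -
  have dim_\<phi>: "dim_vec \<phi> = d" using \<phi> by (simp add: unit_vec_in_def)
  have "\<exists>c<d. \<phi> $ c \<noteq> 0"
  proof (rule ccontr)
    assume "\<not> (\<exists>c<d. \<phi> $ c \<noteq> 0)"
    then have "vnorm \<phi> = 0" using dim_\<phi> by (simp add: vnorm_def)
    with \<phi> show False by (simp add: unit_vec_in_def)
  qed
  then obtain c where c: "c < d" "\<phi> $ c \<noteq> 0" by blast
  define j where "j = (if c = 0 then 1 else (0::nat))"
  have j: "j < d" "j \<noteq> c" using \<open>d \<ge> 2\<close> c by (auto simp: j_def)
  define e :: "complex vec" where "e = unit_vec d j"
  have e: "unit_vec_in d e" "unit_vec_in d ((-1) \<cdot>\<^sub>v e)"
    using unit_vec_in_unit_vec[OF j(1)] unit_vec_in_uminus by (simp_all add: e_def)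
  define a where "a = \<alpha> \<cdot>\<^sub>v e + \<beta> \<cdot>\<^sub>v \<phi>"
  define b where "b = \<alpha> \<cdot>\<^sub>v ((-1) \<cdot>\<^sub>v e) + \<beta> \<cdot>\<^sub>v \<phi>"
  have dims: "dim_vec a = d" "dim_vec b = d" by (simp_all add: a_def b_def dim_\<phi>)
  have ab_c: "a $ c = \<beta> * \<phi> $ c" "b $ c = \<beta> * \<phi> $ c"
    using c j dim_\<phi> by (simp_all add: a_def b_def e_def)
  have ab_j: "a $ j = \<alpha> + \<beta> * \<phi> $ j" "b $ j = - \<alpha> + \<beta> * \<phi> $ j"
    using j dim_\<phi> by (simp_all add: a_def b_def e_def)
  have "a \<noteq> 0\<^sub>v d" "b \<noteq> 0\<^sub>v d" using ab_c c \<open>\<beta> \<noteq> 0\<close> by auto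
  then obtain p q :: real where "p > 0"
    and "F (tpow (proj e) k) = complex_of_real p \<cdot>\<^sub>m tpow (proj (normalize_vec a)) n"
    and "F (tpow (proj ((-1) \<cdot>\<^sub>v e)) k) = complex_of_real q \<cdot>\<^sub>m tpow (proj (normalize_vec b)) n"
    using superpose e unfolding a_def b_def by blast
  then have "complex_of_real p \<cdot>\<^sub>m proj (vtpow (normalize_vec a) n)
      = complex_of_real q \<cdot>\<^sub>m proj (vtpow (normalize_vec b) n)"
    by (simp add: proj_uminus_one_smult tpow_proj)
  moreover define r s where "r = complex_of_real (1 / vnorm a)" and "s = complex_of_real (1 / vnorm b)"
  moreover have "r \<noteq> 0" "s \<noteq> 0"
    using vnorm_nonzero[of c a] vnorm_nonzero[of c b] ab_c c dims \<open>\<beta> \<noteq> 0\<close>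
    by (simp_all add: r_def s_def)
  ultimately have "(r * a $ j) * (s * b $ c) = (s * b $ j) * (r * a $ c)"
    using proportional_proj_vtpow[of "complex_of_real p" "normalize_vec a" n
        "complex_of_real q" "normalize_vec b" c j] \<open>p > 0\<close> \<open>n > 0\<close> c j dims ab_c \<open>\<beta> \<noteq> 0\<close>
    by (simp add: normalize_vec_def)
  with \<open>r \<noteq> 0\<close> \<open>s \<noteq> 0\<close> have "a $ j = b $ j" using ab_c c \<open>\<beta> \<noteq> 0\<close> by simp
  with ab_j \<open>\<alpha> \<noteq> 0\<close> show False by simp
qed


theorem theorem3:
  fixes d k n :: nat and \<alpha> \<beta> :: complex and \<phi> :: "complex vec"
  assumes "d \<ge> 2" and "k > 0" and "n > 0"
    and "(cmod \<alpha>)\<^sup>2 + (cmod \<beta>)\<^sup>2 = 1" and "cmod \<beta> \<noteq> 1"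
    and "unit_vec_in d \<phi>"
  shows
   "(0 < cmod \<beta> \<and> cmod \<beta> < 1 \<longrightarrow>
      \<not> (\<exists>F. prob_qt (d ^ k) (d ^ n) F \<and>
           (\<forall>\<psi>. unit_vec_in d \<psi> \<and> \<alpha> \<cdot>\<^sub>v \<psi> + \<beta> \<cdot>\<^sub>v \<phi> \<noteq> 0\<^sub>v d \<longrightarrow>
              (\<exists>p::real. p > 0 \<and>
                 F (tpow (proj \<psi>) k) =
                   complex_of_real p \<cdot>\<^sub>m tpow (proj (normalize_vec (\<alpha> \<cdot>\<^sub>v \<psi> + \<beta> \<cdot>\<^sub>v \<phi>))) n))))
    \<and> (\<beta> = 0 \<and> n > k \<longrightarrow>
      \<not> (\<exists>F. prob_qt (d ^ k) (d ^ n) F \<and>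
           (\<forall>\<psi>. unit_vec_in d \<psi> \<longrightarrow>
              (\<exists>p::real. p > 0 \<and>
                 F (tpow (proj \<psi>) k) = complex_of_real p \<cdot>\<^sub>m tpow (proj \<psi>) n))))
    \<and> (\<beta> = 0 \<and> n < k \<longrightarrow>
      (\<forall>z. unit_vec_in d z \<longrightarrow>
        \<not> (\<exists>U. unitary_mat (d ^ k) U \<and>
           (\<forall>\<psi>. unit_vec_in d \<psi> \<longrightarrow>
              U * tpow (proj \<psi>) k * cadj U = kron (tpow (proj \<psi>) n) (tpow (proj z) (k - n))))))"
proof (intro conjI impI allI notI; elim conjE exE)
  fix F assume "0 < cmod \<beta>" "cmod \<beta> < 1"
  moreover have "(cmod \<beta>)\<^sup>2 < 1" using \<open>cmod \<beta> < 1\<close> by (simp add: power_less_one_iff)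
  ultimately have "\<alpha> \<noteq> 0" "\<beta> \<noteq> 0" using assms(4) by auto
  then show "\<forall>\<psi>. unit_vec_in d \<psi> \<and> \<alpha> \<cdot>\<^sub>v \<psi> + \<beta> \<cdot>\<^sub>v \<phi> \<noteq> 0\<^sub>v d \<longrightarrow>
      (\<exists>p::real. p > 0 \<and> F (tpow (proj \<psi>) k) =
         complex_of_real p \<cdot>\<^sub>m tpow (proj (normalize_vec (\<alpha> \<cdot>\<^sub>v \<psi> + \<beta> \<cdot>\<^sub>v \<phi>))) n) \<Longrightarrow> False"
    using no_superposing_map assms(1,3,6) by blast
next
  fix F assume "k < n" "prob_qt (d ^ k) (d ^ n) F"
  then show "\<forall>\<psi>. unit_vec_in d \<psi> \<longrightarrow> (\<exists>p::real. p > 0 \<and>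
      F (tpow (proj \<psi>) k) = complex_of_real p \<cdot>\<^sub>m tpow (proj \<psi>) n) \<Longrightarrow> False"
    using no_linear_cloning[OF assms(1)] prob_qt_linear_on by blast
next
  fix z U assume "n < k" "unit_vec_in d z" "unitary_mat (d ^ k) U"
  moreover from \<open>unit_vec_in d z\<close> have "dim_vec z = d" by (simp add: unit_vec_in_def)
  ultimately show "\<forall>\<psi>. unit_vec_in d \<psi> \<longrightarrow>
      U * tpow (proj \<psi>) k * cadj U = kron (tpow (proj \<psi>) n) (tpow (proj z) (k - n)) \<Longrightarrow> False"
    using no_unitary_deletion[OF assms(1)] by blast
qed

end
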